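(* Let $\alpha\in(0,1]$, let $\mathbb X$ be a finite-dimensional real Hilbert space, and let $\mathfrak D\subseteq\mathbb X$ be a closed convex set that is $C^{1,\alpha}$-cone reducible at $\hat x\in\mathfrak D$. Let $\hat y\in\mathcal N_{\mathfrak D}(\hat x)$. Then there exist $\hat\rho>0$, $\hat\delta>0$ and $\hat\kappa>0$ such that $$\mathcal N_{\mathfrak D}(x)\cap B(\hat y,\hat\delta)\subseteq\mathcal N_{\mathfrak D}(\hat x)+\hat\kappa\|x-\hat x\|^\alpha B(0,1)\quad\text{for all }x\in B(\hat x,\hat\rho).$$
   Context: $B(x,\eta):=\{u:\|u-x\|\le\eta\}$. For a closed convex set $\mathfrak D$, $\mathcal N_{\mathfrak D}(x):=\{v:\langle v,u-x\rangle\le0\ \forall u\in\mathfrak D\}$ if $x\in\mathfrak D$ (and $\emptyset$ otherwise). Definition ($C^{1,\alpha}$-cone reducibility): for $\alpha\in(0,1]$, a closed set $\mathfrak D\subseteq\mathbb X$ is $C^{1,\alpha}$-cone reducible at $\hat x\in\mathfrak D$ if there exist $\rho>0$, a closed convex pointed cone $K$ in a finite-dimensional Hilbert space $\mathbb Y$, and a mapping $\Xi:\mathbb X\to\mathbb Y$ with $\Xi(\hat x)=0$ that is continuously differentiable on $B(\hat x,\rho)$, such that the derivative $D\Xi(\hat x)$ is surjective, the mapping $x\mapsto D\Xi(x)$ is $\alpha$-Hölder continuous on $B(\hat x,\rho)$, and $\mathfrak D\cap B(\hat x,\rho)=\{x:\Xi(x)\in K\}\cap B(\hat x,\rho)$.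 $\mathfrak D$ is $C^{1,\alpha}$-cone reducible if it is so at every point of $\mathfrak D$. *)

theory Defs
  imports "HOL-Analysis.Analysis"
begin

definition normal_cone :: "'a::real_inner set \<Rightarrow> 'a \<Rightarrow> 'a set" where
  "normal_cone D x = (if x \<in> D then {v. \<forall>u\<in>D. inner v (u - x) \<le> 0} else {})"

definition pointed_cone :: "'b::real_vector set \<Rightarrow> bool" where
  "pointed_cone K \<longleftrightarrow> cone K \<and> convex K \<and> K \<inter> uminus ` K \<subseteq> {0}"

text \<open>C^{1,alpha}-cone reducibility of D at xh, with the cone living in the
  finite-dimensional Hilbert space given by the type 'b.\<close>
definition C1alpha_cone_reducible_at ::
  "real \<Rightarrow> 'a::euclidean_space set \<Rightarrow> 'a \<Rightarrow> 'b::euclidean_space itself \<Rightarrow> bool" where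
  "C1alpha_cone_reducible_at \<alpha> D xh (_::'b itself) \<longleftrightarrow>
     (\<exists>\<rho>>0. \<exists>K::'b set. \<exists>Xi::'a \<Rightarrow> 'b. \<exists>DXi::'a \<Rightarrow> ('a \<Rightarrow>\<^sub>L 'b).
        closed K \<and> pointed_cone K \<and> Xi xh = 0 \<and>
        (\<forall>x\<in>cball xh \<rho>. (Xi has_derivative blinfun_apply (DXi x)) (at x)) \<and>
        continuous_on (cball xh \<rho>) DXi \<and>
        surj (blinfun_apply (DXi xh)) \<and>
        (\<exists>L. \<forall>x\<in>cball xh \<rho>. \<forall>u\<in>cball xh \<rho>. norm (DXi x - DXi u) \<le> L * norm (x - u) powr \<alpha>) \<and>
        D \<inter> cball xh \<rho> = {x. Xi x \<in> K} \<inter> cball xh \<rho>)"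

end

theory Submission
  imports Defs
begin

text \<open>
  Near \<open>xh\<close> the set \<open>D\<close> is the preimage of the convex cone \<open>K\<close> under \<open>Xi\<close>, whose derivative
  \<open>A\<close> at \<open>xh\<close> has a bounded right inverse, so a Newton-type contraction makes \<open>Xi\<close> locally
  metrically regular. Let \<open>v\<close> be normal to \<open>D\<close> at \<open>x\<close> with \<open>r = norm (x - xh)\<close> small, and
  \<open>xh + p \<in> D\<close> with \<open>norm p \<le> r\<close>. Then \<open>Xi x + Xi (xh + p) \<in> K\<close> differs from \<open>Xi (x + p)\<close>
  by two linearization errors of size \<open>O(r\<^sup>\<alpha> norm p)\<close>, so it has a preimage \<open>z \<in> D\<close> that
  close to \<open>x + p\<close>, and \<open>inner v (z - x) \<le> 0\<close> gives \<open>inner v p \<le> C r\<^sup>\<alpha> norm v norm p\<close>.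
  By convexity this bound holds for all directions \<open>u - xh\<close>, \<open>u \<in> D\<close>; since the polar of the
  normal cone at \<open>xh\<close> is the tangent cone there, projecting \<open>v\<close> onto the normal cone
  shows that \<open>v\<close> lies within \<open>C r\<^sup>\<alpha> norm v\<close> of it.
\<close>

lemma mem_normal_cone: "v \<in> normal_cone D x \<longleftrightarrow> x \<in> D \<and> (\<forall>u\<in>D. inner v (u - x) \<le> 0)"
  by (auto simp: normal_cone_def)

lemma normal_cone_eq_Inter_halfspaces:
  "x \<in> D \<Longrightarrow> normal_cone D x = (\<Inter>u\<in>D. {v. inner (u - x) v \<le> 0})"
  by (auto simp: normal_cone_def inner_commute)

lemma closed_normal_cone: "closed (normal_cone D x)"
  by (cases "x \<in> D")
    (simp_all add: normal_cone_eq_Inter_halfspaces closed_INT closed_halfspace_le,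
     simp add: normal_cone_def)

lemma convex_normal_cone: "convex (normal_cone D x)"
  by (cases "x \<in> D")
    (simp_all add: normal_cone_eq_Inter_halfspaces convex_INT convex_halfspace_le,
     simp add: normal_cone_def)

lemma cone_normal_cone: "cone (normal_cone D x)"
  by (auto simp: cone_def mem_normal_cone intro: mult_nonneg_nonpos)

lemma zero_in_normal_cone: "x \<in> D \<Longrightarrow> 0 \<in> normal_cone D x"
  by (simp add: mem_normal_cone)

lemma closed_convex_cone_projection:
  fixes N :: "'a::euclidean_space set"
  assumes "closed N" "convex N" "cone N" "0 \<in> N"
  obtains p where "p \<in> N" "inner (v - p) p = 0" "\<And>n. n \<in> N \<Longrightarrow> inner (v - p) n \<le> 0"
proof
  define p where "p = closest_point N v"
  show p: "p \<in> N"
    unfolding p_def using closest_point_exists(1) assms(1,4) by blast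
  have "\<forall>z\<in>N. dist v p \<le> dist v z"
    unfolding p_def using closest_point_exists(2) assms(1,4) by blast
  then have dot: "inner (v - p) (n - p) \<le> 0" if "n \<in> N" for n
    using any_closest_point_dot[OF assms(2,1) p that] by blast
  have "2 *\<^sub>R p \<in> N"
    using \<open>cone N\<close> p by (simp add: cone_def)
  from dot[OF \<open>0 \<in> N\<close>] dot[OF this] show orth: "inner (v - p) p = 0"
    by (simp add: inner_diff_right)
  show "inner (v - p) n \<le> 0" if "n \<in> N" for n
    using dot[OF that] orth by (simp add: inner_diff_right)
qed

definition tangent_cone :: "'a::real_normed_vector set \<Rightarrow> 'a \<Rightarrow> 'a set" where
  "tangent_cone D x = closure (cone hull ((\<lambda>u. u - x) ` D))"

lemma inner_le_norm_on_tangent_cone: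
  assumes "\<forall>u\<in>D. inner v (u - x) \<le> c * norm (u - x)" and "d \<in> tangent_cone D x"
  shows "inner v d \<le> c * norm d"
proof -
  have "cone hull ((\<lambda>u. u - x) ` D) \<subseteq> {d. inner v d \<le> c * norm d}"
  proof
    fix d assume "d \<in> cone hull ((\<lambda>u. u - x) ` D)"
    then obtain t u where d: "d = t *\<^sub>R (u - x)" "0 \<le> t" "u \<in> D"
      unfolding cone_hull_expl by auto
    have "inner v d = t * inner v (u - x)" using d by simp
    also have "\<dots> \<le> t * (c * norm (u - x))" using assms(1) d by (simp add: mult_left_mono)
    also have "\<dots> = c * norm d" using d by simp
    finally show "d \<in> {d. inner v d \<le> c * norm d}" by simp
  qed
  moreover have "closed {d. inner v d \<le> c * norm d}"
    by (rule closed_Collect_le) (auto intro!: continuous_intros)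
  ultimately show ?thesis
    using assms(2) closure_minimal unfolding tangent_cone_def by blast
qed

lemma polar_normal_cone_subset_tangent_cone:
  fixes D :: "'a::euclidean_space set"
  assumes "convex D" "x \<in> D" and polar: "\<forall>n\<in>normal_cone D x. inner w n \<le> 0"
  shows "w \<in> tangent_cone D x"
proof (rule ccontr)
  let ?T = "tangent_cone D x"
  assume "w \<notin> ?T"
  moreover have "convex ?T"
    unfolding tangent_cone_def
    by (intro convex_closure convex_cone_hull convex_translation_subtract assms(1))
  ultimately obtain a b where ab: "inner a w < b" "\<forall>d\<in>?T. b < inner a d"
    using separating_hyperplane_closed_point[of ?T w] unfolding tangent_cone_def by auto
  have ray: "t *\<^sub>R (u - x) \<in> ?T" if "0 \<le> t" "u \<in> D" for t u
  proof -
    have "t *\<^sub>R (u - x) \<in> cone hull ((\<lambda>u. u - x) ` D)"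
      unfolding cone_hull_expl using that by blast
    then show ?thesis unfolding tangent_cone_def using closure_subset by blast
  qed
  from ab(2) ray[OF order_refl \<open>x \<in> D\<close>] have "b < 0" by fastforce
  have "- a \<in> normal_cone D x"
    unfolding mem_normal_cone
  proof (intro conjI ballI assms(2))
    fix u assume "u \<in> D"
    show "inner (- a) (u - x) \<le> 0"
    proof (rule ccontr)
      assume "\<not> ?thesis"
      then have neg: "inner a (u - x) < 0" by simp
      \<comment> \<open>the ray through \<open>u - x\<close> reaches the level \<open>b\<close> of the separating hyperplane\<close>
      define t where "t = b / inner a (u - x)"
      have "0 \<le> t" unfolding t_def using neg \<open>b < 0\<close> by (simp add: divide_nonpos_neg)
      with ab(2) ray \<open>u \<in> D\<close> have "b < inner a (t *\<^sub>R (u - x))" by blast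
      moreover have "inner a (t *\<^sub>R (u - x)) = b" unfolding t_def using neg by simp
      ultimately show False by simp
    qed
  qed
  with polar ab(1) \<open>b < 0\<close> show False by (fastforce simp: inner_commute)
qed

lemma near_normal_cone_if_inner_le_norm:
  fixes D :: "'a::euclidean_space set"
  assumes "convex D" "x \<in> D" "0 \<le> c" and bound: "\<forall>u\<in>D. inner v (u - x) \<le> c * norm (u - x)"
  shows "\<exists>p\<in>normal_cone D x. norm (v - p) \<le> c"
proof -
  obtain p where p: "p \<in> normal_cone D x" "inner (v - p) p = 0"
    and polar: "\<And>n. n \<in> normal_cone D x \<Longrightarrow> inner (v - p) n \<le> 0"
    using closed_convex_cone_projection closed_normal_cone convex_normal_cone cone_normal_cone
      zero_in_normal_cone[OF \<open>x \<in> D\<close>] by metis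
  have "v - p \<in> tangent_cone D x"
    using polar_normal_cone_subset_tangent_cone[OF assms(1,2)] polar by blast
  then have "inner v (v - p) \<le> c * norm (v - p)"
    using inner_le_norm_on_tangent_cone[OF bound] by blast
  moreover have "inner v (v - p) = norm (v - p) ^ 2"
    using p(2) by (simp add: power2_norm_eq_inner inner_diff_left inner_commute)
  ultimately have "norm (v - p) * norm (v - p) \<le> c * norm (v - p)"
    by (simp add: power2_eq_square)
  then have "norm (v - p) \<le> c"
    using \<open>0 \<le> c\<close> by (cases "v = p") (simp_all add: mult_le_cancel_right)
  with p(1) show ?thesis by blast
qed

lemma convex_inner_le_norm_if_local:
  assumes "convex D" "x \<in> D" "0 < r" "u \<in> D"
    and local: "\<And>p. x + p \<in> D \<Longrightarrow> norm p \<le> r \<Longrightarrow> inner v p \<le> c * norm p"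
  shows "inner v (u - x) \<le> c * norm (u - x)"
proof (cases "u = x")
  case False
  define s where "s = min 1 (r / norm (u - x))"
  have s: "0 < s" "s \<le> 1" "s * norm (u - x) \<le> r"
    using False \<open>0 < r\<close> by (auto simp: s_def min_def field_simps)
  have "x + s *\<^sub>R (u - x) = (1 - s) *\<^sub>R x + s *\<^sub>R u"
    by (simp add: algebra_simps)
  then have "x + s *\<^sub>R (u - x) \<in> D"
    using convexD[OF assms(1,2,4), of "1 - s" s] s by simp
  from local[OF this] s have "s * inner v (u - x) \<le> s * (c * norm (u - x))"
    by (simp add: mult.left_commute)
  with \<open>0 < s\<close> show ?thesis by simp
qed simp

lemma linearization_error_le:
  fixes f :: "'a::real_normed_vector \<Rightarrow> 'b::real_normed_vector"
  assumes "convex S" "x0 \<in> S" "a \<in> S" "b \<in> S"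
    and "\<And>x. x \<in> S \<Longrightarrow> (f has_derivative blinfun_apply (f' x)) (at x within S)"
    and "\<And>x. x \<in> S \<Longrightarrow> norm (f' x - f' x0) \<le> B"
  shows "norm (f b - f a - f' x0 (b - a)) \<le> B * norm (b - a)"
proof -
  have "a + t *\<^sub>R (b - a) \<in> S" if "t \<in> {0..1}" for t
    using convexD_alt[OF assms(1,3,4), of t] that by (simp add: algebra_simps)
  moreover have "onorm (blinfun_apply (f' x) - blinfun_apply (f' x0)) \<le> B" if "x \<in> S" for x
    using assms(6)[OF that] by (simp add: norm_blinfun.rep_eq minus_blinfun.rep_eq fun_diff_def)
  ultimately show ?thesis
    using differentiable_bound_linearization[where f' = "\<lambda>x. blinfun_apply (f' x)", OF _ assms(5) _ assms(2)]
    by (simp add: mult.commute)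
qed

lemma holder_linearization_error_le:
  fixes f :: "'a::real_normed_vector \<Rightarrow> 'b::real_normed_vector"
  assumes der: "\<forall>x\<in>cball x0 \<rho>. (f has_derivative blinfun_apply (f' x)) (at x)"
    and holder: "\<forall>x\<in>cball x0 \<rho>. \<forall>u\<in>cball x0 \<rho>. norm (f' x - f' u) \<le> L * norm (x - u) powr \<alpha>"
    and "0 \<le> L" "0 \<le> \<alpha>" "s \<le> \<rho>" "a \<in> cball x0 s" "b \<in> cball x0 s"
  shows "norm (f b - f a - f' x0 (b - a)) \<le> L * s powr \<alpha> * norm (b - a)"
proof (rule linearization_error_le)
  have "0 \<le> s" using \<open>a \<in> cball x0 s\<close> dist_not_less_zero[of x0 a] by (simp, linarith)
  then show "x0 \<in> cball x0 s" by simp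
  have sub: "cball x0 s \<subseteq> cball x0 \<rho>" using \<open>s \<le> \<rho>\<close> by (rule subset_cball)
  fix x assume x: "x \<in> cball x0 s"
  with sub der show "(f has_derivative blinfun_apply (f' x)) (at x within cball x0 s)"
    by (blast intro: has_derivative_at_withinI)
  have "norm (f' x - f' x0) \<le> L * norm (x - x0) powr \<alpha>"
    using holder x sub \<open>0 \<le> s\<close> by (meson centre_in_cball order_trans subsetD)
  also have "\<dots> \<le> L * s powr \<alpha>"
    using x \<open>0 \<le> L\<close> \<open>0 \<le> \<alpha>\<close>
    by (intro mult_left_mono powr_mono2) (auto simp: dist_norm norm_minus_commute)
  finally show "norm (f' x - f' x0) \<le> L * s powr \<alpha>" .
qed (use assms in auto)

lemma exists_small_radius_powr:
  fixes \<alpha> M c \<rho> :: real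
  assumes "0 < \<alpha>" "0 \<le> M" "0 < c" "0 < \<rho>"
  obtains s where "0 < s" "s \<le> \<rho>" "M * s powr \<alpha> \<le> c"
proof
  define s0 where "s0 = (c / (M + 1)) powr (1 / \<alpha>)"
  show "0 < min \<rho> s0" "min \<rho> s0 \<le> \<rho>"
    using assms by (auto simp: s0_def)
  have "min \<rho> s0 powr \<alpha> \<le> s0 powr \<alpha>"
    using assms by (intro powr_mono2) (auto simp: s0_def)
  also have "\<dots> = c / (M + 1)"
    using assms by (simp add: s0_def powr_powr)
  finally have "M * min \<rho> s0 powr \<alpha> \<le> M * (c / (M + 1))"
    using assms by (intro mult_left_mono) auto
  also have "\<dots> \<le> c"
    using assms by (simp add: field_simps)
  finally show "M * min \<rho> s0 powr \<alpha> \<le> c" .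
qed

lemma linear_surj_bounded_right_inverse:
  fixes A :: "'a::euclidean_space \<Rightarrow> 'b::euclidean_space"
  assumes "linear A" "surj A"
  obtains g B where "linear g" "\<And>e. A (g e) = e" "0 < B" "\<And>e. norm (g e) \<le> B * norm e"
proof -
  obtain g where "linear g" "A \<circ> g = id"
    using linear_surjective_right_inverse[OF assms] by blast
  moreover obtain B where "0 < B" "\<And>e. norm (g e) \<le> B * norm e"
    using linear_bounded_pos[OF \<open>linear g\<close>] by blast
  ultimately show ?thesis
    using that by (metis comp_apply id_apply)
qed

text \<open>A Lyusternik--Graves estimate: the Newton-type map \<open>e \<mapsto> e - (f (w + g e) - y)\<close>
  is a contraction with constant \<open>1/2\<close> on the ball of radius \<open>2 * norm (y - f w)\<close>.\<close>
lemma exists_preimage_near: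
  fixes f :: "'a::real_normed_vector \<Rightarrow> 'b::banach"
  assumes g: "linear g" "\<And>e. A (g e) = e" "0 < B" "\<And>e. norm (g e) \<le> B * norm e"
    and approx: "\<And>a b. a \<in> cball w R \<Longrightarrow> b \<in> cball w R \<Longrightarrow>
                   2 * B * norm (f b - f a - A (b - a)) \<le> norm (b - a)"
    and close: "2 * B * norm (y - f w) \<le> R"
  shows "\<exists>z. f z = y \<and> norm (z - w) \<le> 2 * B * norm (y - f w)"
proof -
  define r where "r = 2 * norm (y - f w)"
  define F where "F e = e - (f (w + g e) - y)" for e
  have g_ball: "norm (g e) \<le> B * r" if "e \<in> cball 0 r" for e
    using order_trans[OF g(4)[of e] mult_left_mono[of "norm e" r B]] that \<open>0 < B\<close> by simp
  have in_ball: "w + g e \<in> cball w R" if "e \<in> cball 0 r" for e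
    using g_ball[OF that] close by (simp add: dist_norm r_def)
  have contraction: "dist (F e1) (F e2) \<le> 1/2 * dist e1 e2"
    if "e1 \<in> cball 0 r" "e2 \<in> cball 0 r" for e1 e2
  proof -
    have diff: "(w + g e1) - (w + g e2) = g (e1 - e2)"
      using linear_diff[OF g(1)] by simp
    have "F e1 - F e2 = - (f (w + g e1) - f (w + g e2) - A (g (e1 - e2)))"
      unfolding F_def g(2) by (simp add: algebra_simps)
    moreover have "2 * B * norm (f (w + g e1) - f (w + g e2) - A (g (e1 - e2))) \<le> norm (g (e1 - e2))"
      using approx[OF in_ball[OF that(2)] in_ball[OF that(1)]] unfolding diff .
    ultimately have "2 * B * dist (F e1) (F e2) \<le> norm (g (e1 - e2))"
      by (simp add: dist_norm norm_minus_commute)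
    also have "\<dots> \<le> B * dist e1 e2"
      using g(4) by (simp add: dist_norm)
    finally show ?thesis
      using \<open>0 < B\<close> by simp
  qed
  have maps_to: "F ` cball 0 r \<subseteq> cball 0 r"
  proof (rule image_subsetI)
    fix e :: 'b assume e: "e \<in> cball 0 r"
    have "0 \<in> cball 0 r" by (simp add: r_def)
    from contraction[OF e this] have "dist (F e) (F 0) \<le> r / 2"
      using e by simp
    moreover have "F 0 = y - f w"
      using linear_0[OF g(1)] by (simp add: F_def)
    ultimately show "F e \<in> cball 0 r"
      using norm_triangle_sub[of "F e" "F 0"] by (simp add: dist_norm r_def)
  qed
  have "\<exists>!e\<in>cball 0 r. F e = e"
    by (rule Banach_fix[OF _ _ _ _ maps_to contraction]) (auto simp: complete_eq_closed r_def)
  then obtain e where e: "e \<in> cball 0 r" "F e = e"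
    by blast
  then have "f (w + g e) = y" by (simp add: F_def)
  with g_ball[OF e(1)] show ?thesis
    by (intro exI[of _ "w + g e"]) (simp add: r_def)
qed

lemma inner_normal_le_linearization_error:
  fixes Xi :: "'a::real_inner \<Rightarrow> 'b::banach"
  assumes K: "convex K" "cone K"
    and red: "D \<inter> cball xh (3 * r) = {z. Xi z \<in> K} \<inter> cball xh (3 * r)" and "Xi xh = 0"
    and g: "linear g" "\<And>e. A (g e) = e" "0 < B" "\<And>e. norm (g e) \<le> B * norm e"
    and err: "\<And>a b. a \<in> cball xh (3 * r) \<Longrightarrow> b \<in> cball xh (3 * r) \<Longrightarrow>
                norm (Xi b - Xi a - A (b - a)) \<le> H * norm (b - a)"
    and small: "4 * B * H \<le> 1"
    and x: "norm (x - xh) \<le> r" "v \<in> normal_cone D x"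
    and p: "xh + p \<in> D" "norm p \<le> r"
  shows "inner v p \<le> 4 * B * H * norm v * norm p"
proof -
  let ?S = "cball xh (3 * r)"
  have "0 \<le> r" using p(2) norm_ge_zero[of p] by linarith
  have xD: "x \<in> D" and normal: "\<And>u. u \<in> D \<Longrightarrow> inner v (u - x) \<le> 0"
    using x(2) by (auto simp: mem_normal_cone)
  have "dist xh (x + p) = norm ((x - xh) + p)"
    by (metis diff_add_eq dist_commute dist_norm)
  then have near: "dist xh (x + p) \<le> 2 * r"
    using norm_triangle_ineq[of "x - xh" p] x(1) p(2) by linarith
  have in_S: "x \<in> ?S" "xh \<in> ?S" "x + p \<in> ?S" "xh + p \<in> ?S"
    using x(1) p(2) near \<open>0 \<le> r\<close> by (simp_all add: dist_commute dist_norm)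
  \<comment> \<open>\<open>y\<close> lies in \<open>K\<close>, and differs from \<open>Xi (x + p)\<close> only by two linearization errors\<close>
  define y where "y = Xi x + Xi (xh + p)"
  have "Xi x \<in> K" "Xi (xh + p) \<in> K"
    using red in_S(1,4) xD p(1) by blast+
  moreover have "\<forall>k\<in>K. \<forall>k'\<in>K. k + k' \<in> K"
    using K convex_cone[of K] by blast
  ultimately have "y \<in> K"
    by (simp add: y_def)
  have "y - Xi (x + p) = (Xi (xh + p) - Xi xh - A p) - (Xi (x + p) - Xi x - A p)"
    using \<open>Xi xh = 0\<close> by (simp add: y_def algebra_simps)
  then have "norm (y - Xi (x + p)) \<le> norm (Xi (xh + p) - Xi xh - A p) + norm (Xi (x + p) - Xi x - A p)"
    by (simp only: norm_triangle_ineq4)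
  moreover have "norm (Xi (xh + p) - Xi xh - A p) \<le> H * norm p" "norm (Xi (x + p) - Xi x - A p) \<le> H * norm p"
    using err[OF in_S(2,4)] err[OF in_S(1,3)] by simp_all
  ultimately have "norm (y - Xi (x + p)) \<le> 2 * H * norm p"
    by linarith
  then have "2 * B * norm (y - Xi (x + p)) \<le> 2 * B * (2 * H * norm p)"
    using \<open>0 < B\<close> by (intro mult_left_mono) simp_all
  then have y_err: "2 * B * norm (y - Xi (x + p)) \<le> 4 * B * H * norm p"
    by (simp add: algebra_simps)
  have Hp: "4 * B * H * norm p \<le> r"
    using mult_right_mono[OF small, of "norm p"] p(2) by simp
  have sub: "cball (x + p) r \<subseteq> ?S"
  proof
    fix a assume "a \<in> cball (x + p) r"
    then show "a \<in> ?S" using dist_triangle[of xh a "x + p"] near by simp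
  qed
  have approx: "2 * B * norm (Xi b - Xi a - A (b - a)) \<le> norm (b - a)"
    if "a \<in> cball (x + p) r" "b \<in> cball (x + p) r" for a b
  proof -
    have "norm (Xi b - Xi a - A (b - a)) \<le> H * norm (b - a)"
      using err that sub by blast
    then have "2 * B * norm (Xi b - Xi a - A (b - a)) \<le> (2 * B * H) * norm (b - a)"
      using \<open>0 < B\<close> by (simp add: mult.assoc)
    also have "\<dots> \<le> 1 * norm (b - a)"
      using small by (intro mult_right_mono) (linarith, simp)
    finally show ?thesis by simp
  qed
  from y_err Hp have "2 * B * norm (y - Xi (x + p)) \<le> r"
    by linarith
  from exists_preimage_near[OF g approx this] y_err
  obtain z where z: "Xi z = y" "norm (z - (x + p)) \<le> 4 * B * H * norm p"
    by fastforce
  have "z \<in> D"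
  proof -
    have "dist (x + p) z = norm (z - (x + p))"
      by (simp add: dist_norm norm_minus_commute)
    then have "dist xh z \<le> 3 * r"
      using dist_triangle[of xh z "x + p"] near z(2) Hp by linarith
    with z(1) \<open>y \<in> K\<close> have "z \<in> {z. Xi z \<in> K} \<inter> ?S"
      by simp
    with red show ?thesis by blast
  qed
  have "inner v p = inner v (z - x) - inner v (z - (x + p))"
    by (simp add: inner_diff_right inner_add_right)
  also have "\<dots> \<le> norm v * norm (z - (x + p))"
    using normal[OF \<open>z \<in> D\<close>] norm_cauchy_schwarz[of "- v" "z - (x + p)"] by simp
  also have "\<dots> \<le> norm v * (4 * B * H * norm p)"
    using z(2) by (simp add: mult_left_mono)
  finally show ?thesis by (simp add: algebra_simps)
qed

lemma C1alpha_cone_reducible_atE: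
  fixes D :: "'a::euclidean_space set"
  assumes "0 < \<alpha>" "C1alpha_cone_reducible_at \<alpha> D xh TYPE('b::euclidean_space)"
  obtains \<rho> K and Xi :: "'a \<Rightarrow> 'b::euclidean_space" and g A B L where
    "0 < \<rho>" "convex K" "cone K" "Xi xh = 0"
    "D \<inter> cball xh \<rho> = {x. Xi x \<in> K} \<inter> cball xh \<rho>"
    "linear g" "\<And>e. A (g e) = e" "0 < B" "\<And>e. norm (g e) \<le> B * norm e"
    "0 \<le> L" "\<And>s a b. s \<le> \<rho> \<Longrightarrow> a \<in> cball xh s \<Longrightarrow> b \<in> cball xh s \<Longrightarrow>
       norm (Xi b - Xi a - A (b - a)) \<le> L * s powr \<alpha> * norm (b - a)"
proof -
  obtain \<rho> and K :: "'b set" and Xi :: "'a \<Rightarrow> 'b" and DXi :: "'a \<Rightarrow> ('a \<Rightarrow>\<^sub>L 'b)" and L where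
    \<rho>: "0 < \<rho>" and K: "pointed_cone K" and "Xi xh = 0"
    and der: "\<forall>x\<in>cball xh \<rho>. (Xi has_derivative blinfun_apply (DXi x)) (at x)"
    and surj: "surj (blinfun_apply (DXi xh))"
    and holder: "\<forall>x\<in>cball xh \<rho>. \<forall>u\<in>cball xh \<rho>. norm (DXi x - DXi u) \<le> L * norm (x - u) powr \<alpha>"
    and red: "D \<inter> cball xh \<rho> = {x. Xi x \<in> K} \<inter> cball xh \<rho>"
    using assms(2) unfolding C1alpha_cone_reducible_at_def by blast
  obtain g B where g: "linear g" "\<And>e. DXi xh (g e) = e" "0 < B" "\<And>e. norm (g e) \<le> B * norm e"
    using linear_surj_bounded_right_inverse[OF blinfun.bounded_linear_right[THEN bounded_linear.linear] surj]
    by blast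
  have "\<forall>x\<in>cball xh \<rho>. \<forall>u\<in>cball xh \<rho>. norm (DXi x - DXi u) \<le> max L 0 * norm (x - u) powr \<alpha>"
    using holder by (meson max.cobounded1 mult_right_mono order_trans powr_ge_zero)
  from holder_linearization_error_le[OF der this] assms(1)
  have err: "norm (Xi b - Xi a - DXi xh (b - a)) \<le> max L 0 * s powr \<alpha> * norm (b - a)"
    if "s \<le> \<rho>" "a \<in> cball xh s" "b \<in> cball xh s" for s a b
    using that by simp
  show ?thesis
    using K unfolding pointed_cone_def
    by (intro that[of \<rho> K Xi g "blinfun_apply (DXi xh)" B "max L 0"])
      (use \<rho> \<open>Xi xh = 0\<close> red g err in auto)
qed

lemma cone_reducible_normal_inner_le:
  fixes D :: "'a::euclidean_space set"
  assumes "0 < \<alpha>" "convex D" "xh \<in> D"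
    and "C1alpha_cone_reducible_at \<alpha> D xh TYPE('b::euclidean_space)"
  obtains R C where "0 < R" "0 \<le> C"
    "\<And>x v u. x \<in> cball xh R \<Longrightarrow> v \<in> normal_cone D x \<Longrightarrow> u \<in> D \<Longrightarrow>
       inner v (u - xh) \<le> C * norm (x - xh) powr \<alpha> * norm v * norm (u - xh)"
proof -
  obtain \<rho> K and Xi :: "'a \<Rightarrow> 'b" and g A B L where
    "0 < \<rho>" and K: "convex K" "cone K" and "Xi xh = 0"
    and red: "D \<inter> cball xh \<rho> = {x. Xi x \<in> K} \<inter> cball xh \<rho>"
    and g: "linear g" "\<And>e. A (g e) = e" "0 < B" "\<And>e. norm (g e) \<le> B * norm e"
    and "0 \<le> L" and err: "\<And>s a b. s \<le> \<rho> \<Longrightarrow> a \<in> cball xh s \<Longrightarrow> b \<in> cball xh s \<Longrightarrow>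
       norm (Xi b - Xi a - A (b - a)) \<le> L * s powr \<alpha> * norm (b - a)"
    using C1alpha_cone_reducible_atE[OF assms(1,4)] by blast
  obtain s where s: "0 < s" "s \<le> \<rho>" "4 * B * L * s powr \<alpha> \<le> 1"
    using exists_small_radius_powr[of \<alpha> "4 * B * L" 1 \<rho>] assms(1) \<open>0 < \<rho>\<close> \<open>0 < B\<close> \<open>0 \<le> L\<close>
    by auto
  show ?thesis
  proof (rule that[of "s / 3" "4 * B * L * 3 powr \<alpha>"])
    show "0 < s / 3" "0 \<le> 4 * B * L * 3 powr \<alpha>"
      using s(1) \<open>0 < B\<close> \<open>0 \<le> L\<close> by simp_all
    fix x v u assume x: "x \<in> cball xh (s / 3)" and v: "v \<in> normal_cone D x" and "u \<in> D"
    define r where "r = norm (x - xh)"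
    show "inner v (u - xh) \<le> 4 * B * L * 3 powr \<alpha> * r powr \<alpha> * norm v * norm (u - xh)"
    proof (cases "r = 0")
      case True
      with v \<open>u \<in> D\<close> show ?thesis by (simp add: r_def mem_normal_cone)
    next
      case False
      have "0 \<le> r" by (simp add: r_def)
      define H where "H = L * (3 * r) powr \<alpha>"
      have "3 * r \<le> s"
        using x by (simp add: r_def dist_norm norm_minus_commute)
      have red_r: "D \<inter> cball xh (3 * r) = {x. Xi x \<in> K} \<inter> cball xh (3 * r)"
        using red subset_cball[OF order_trans[OF \<open>3 * r \<le> s\<close> s(2)]] by blast
      have err_r: "norm (Xi b - Xi a - A (b - a)) \<le> H * norm (b - a)"
        if "a \<in> cball xh (3 * r)" "b \<in> cball xh (3 * r)" for a b
        using err[OF order_trans[OF \<open>3 * r \<le> s\<close> s(2)] that] by (simp add: H_def)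
      have "4 * B * H \<le> 4 * B * L * s powr \<alpha>"
        using \<open>3 * r \<le> s\<close> \<open>0 < B\<close> \<open>0 \<le> L\<close> assms(1)
        by (simp add: H_def mult.assoc r_def mult_left_mono powr_mono2)
      with s(3) have "4 * B * H \<le> 1" by linarith
      from inner_normal_le_linearization_error[OF K red_r \<open>Xi xh = 0\<close> g err_r this _ v]
      have "inner v p \<le> (4 * B * H * norm v) * norm p" if "xh + p \<in> D" "norm p \<le> r" for p
        using that by (simp add: r_def)
      with \<open>0 \<le> r\<close> False \<open>u \<in> D\<close>
      have "inner v (u - xh) \<le> (4 * B * H * norm v) * norm (u - xh)"
        by (intro convex_inner_le_norm_if_local[OF assms(2,3), of r]) simp_all
      then show ?thesis
        using \<open>0 \<le> r\<close> by (simp add: H_def powr_mult mult_ac)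
    qed
  qed
qed

theorem lemma4p2:
  fixes \<alpha> :: real and D :: "'a::euclidean_space set" and xh yh :: 'a
  assumes "0 < \<alpha>" and "\<alpha> \<le> 1"
    and "closed D" and "convex D" and "xh \<in> D"
    and "C1alpha_cone_reducible_at \<alpha> D xh TYPE('b::euclidean_space)"
    and "yh \<in> normal_cone D xh"
  shows "\<exists>\<rho>>0. \<exists>\<delta>>0. \<exists>\<kappa>>0. \<forall>x\<in>cball xh \<rho>.
           normal_cone D x \<inter> cball yh \<delta> \<subseteq>
             {v + w | v w. v \<in> normal_cone D xh \<and> w \<in> cball 0 (\<kappa> * norm (x - xh) powr \<alpha>)}"
proof -
  obtain R C where "0 < R" "0 \<le> C" and bound:
    "\<And>x v u. x \<in> cball xh R \<Longrightarrow> v \<in> normal_cone D x \<Longrightarrow> u \<in> D \<Longrightarrow>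
       inner v (u - xh) \<le> C * norm (x - xh) powr \<alpha> * norm v * norm (u - xh)"
    using cone_reducible_normal_inner_le[OF assms(1,4,5,6)] by blast
  define \<kappa> where "\<kappa> = C * (norm yh + 1) + 1"
  \<comment> \<open>\<open>\<delta> = 1\<close> works.\<close>
  have "normal_cone D x \<inter> cball yh 1 \<subseteq>
          {p + w | p w. p \<in> normal_cone D xh \<and> w \<in> cball 0 (\<kappa> * norm (x - xh) powr \<alpha>)}"
    (is "_ \<subseteq> ?sum") if x: "x \<in> cball xh R" for x
  proof
    fix v assume v: "v \<in> normal_cone D x \<inter> cball yh 1"
    let ?c = "C * norm (x - xh) powr \<alpha> * norm v"
    obtain p where p: "p \<in> normal_cone D xh" "norm (v - p) \<le> ?c"
      using near_normal_cone_if_inner_le_norm[OF assms(4,5), of ?c v] bound[OF x] v \<open>0 \<le> C\<close>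
      by auto
    have "norm v \<le> norm yh + 1"
      using v norm_triangle_sub[of v yh] by (simp add: dist_norm norm_minus_commute)
    then have "?c \<le> C * norm (x - xh) powr \<alpha> * (norm yh + 1)"
      using \<open>0 \<le> C\<close> by (intro mult_left_mono) simp_all
    also have "\<dots> \<le> \<kappa> * norm (x - xh) powr \<alpha>"
      by (simp add: \<kappa>_def algebra_simps)
    finally have "?c \<le> \<kappa> * norm (x - xh) powr \<alpha>" .
    with p show "v \<in> ?sum"
      by (intro CollectI exI[of _ p] exI[of _ "v - p"]) simp
  qed
  moreover have "0 < \<kappa>"
    using \<open>0 \<le> C\<close> by (simp add: \<kappa>_def add_nonneg_pos)
  ultimately show ?thesis
    using \<open>0 < R\<close> by (intro exI[of _ R] exI[of _ "1::real"] exI[of _ \<kappa>] conjI ballI) simp_all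
qed

end
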